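(* Let $d\ge3$. Every $d$-regular graph on $n$ vertices has a total vertex cover with at most $\frac{d}{d+1}\,n$ vertices. Moreover, if $d\ge5$, then every connected $d$-regular graph on $n$ vertices other than the complete graph $K_{d+1}$ has a total vertex cover with at most $\frac{d-\epsilon}{d+1}\,n$ vertices, where $\epsilon=\frac{1}{2d+1}$.
   Context: A total vertex cover of a graph $G$ is a set $S\subseteq V(G)$ that is a vertex cover (every edge has an endpoint in $S$) and a total dominating set (every vertex of $G$, including those in $S$, has a neighbour in $S$). *)

theory Defs
  imports Complex_Main
begin

definition simple_graph :: "'a set \<Rightarrow> ('a \<Rightarrow> 'a \<Rightarrow> bool) \<Rightarrow> bool" where
  "simple_graph V E \<longleftrightarrow> finite V \<and> (\<forall>u v. E u v \<longrightarrow> u \<in> V \<and> v \<in> V)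
     \<and> (\<forall>u v. E u v \<longrightarrow> E v u) \<and> (\<forall>v. \<not> E v v)"

definition neighbours :: "'a set \<Rightarrow> ('a \<Rightarrow> 'a \<Rightarrow> bool) \<Rightarrow> 'a \<Rightarrow> 'a set" where
  "neighbours V E v = {u \<in> V. E v u}"

definition regular :: "'a set \<Rightarrow> ('a \<Rightarrow> 'a \<Rightarrow> bool) \<Rightarrow> nat \<Rightarrow> bool" where
  "regular V E d \<longleftrightarrow> (\<forall>v\<in>V. card (neighbours V E v) = d)"

definition connected_graph :: "'a set \<Rightarrow> ('a \<Rightarrow> 'a \<Rightarrow> bool) \<Rightarrow> bool" where
  "connected_graph V E \<longleftrightarrow> (\<forall>u\<in>V. \<forall>v\<in>V. E\<^sup>*\<^sup>* u v)"

definition is_complete_graph :: "'a set \<Rightarrow> ('a \<Rightarrow> 'a \<Rightarrow> bool) \<Rightarrow> nat \<Rightarrow> bool" where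
  "is_complete_graph V E k \<longleftrightarrow> card V = k \<and> (\<forall>u\<in>V. \<forall>v\<in>V. u \<noteq> v \<longrightarrow> E u v)"

definition vertex_cover :: "'a set \<Rightarrow> ('a \<Rightarrow> 'a \<Rightarrow> bool) \<Rightarrow> 'a set \<Rightarrow> bool" where
  "vertex_cover V E S \<longleftrightarrow> S \<subseteq> V \<and> (\<forall>u v. E u v \<longrightarrow> u \<in> S \<or> v \<in> S)"

definition total_dominating_set :: "'a set \<Rightarrow> ('a \<Rightarrow> 'a \<Rightarrow> bool) \<Rightarrow> 'a set \<Rightarrow> bool" where
  "total_dominating_set V E S \<longleftrightarrow> S \<subseteq> V \<and> (\<forall>v\<in>V. \<exists>u\<in>S. E v u)"

definition total_vertex_cover :: "'a set \<Rightarrow> ('a \<Rightarrow> 'a \<Rightarrow> bool) \<Rightarrow> 'a set \<Rightarrow> bool" where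
  "total_vertex_cover V E S \<longleftrightarrow> vertex_cover V E S \<and> total_dominating_set V E S"

end

theory Submission
  imports Defs
begin

(* Let S be a minimum total vertex cover and I = V - S, which is independent. Writing deg_I t for
   the number of I-neighbours of t, double counting gives (\<Sum>t\<in>S. deg_I t) = d |I|, so it
   suffices to show that this sum is at least |S|, resp. at least |S| + |I|/2.
   Minimality of S forbids exchanging vertices between S and I so as to enlarge I: a vertex of S
   without I-neighbours therefore has a partner in S whose other neighbours all lie in I, and,
   if G is connected and not K_(d+1), a vertex x of I that is the only I-neighbour of each of its
   neighbours has a partner in S with at most two neighbours outside I, both adjacent to x.
   Partners have large deg_I and can pay for the deficient vertices. *)

lemma card_exchange_one_for_two:
  assumes "finite A" "x \<in> A" "a \<notin> A" "b \<notin> A" "a \<noteq> b"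
  shows "card (insert a (insert b (A - {x}))) = Suc (card A)"
  using assms card_Suc_Diff1[of A x] by simp

text \<open>The discharging rule behind two_card_S_add_card_I_le: the weight 2 k of a vertex t of S with
  k = deg_I t pays 2 for t itself (vertices with k = 0 being paid by their partners, P), 1 to each
  I-neighbour of t if k \<ge> 2, and 1 to x if t is the partner of x \<in> L (Z).\<close>

lemma discharging_inequality:
  fixes d k :: nat
  assumes "5 \<le> d" "P \<Longrightarrow> d \<le> k + 1" "Z \<Longrightarrow> d \<le> k + 2" "\<not> (P \<and> Z)"
  shows "2 + (if 2 \<le> k then k else 0) + 2 * of_bool P + of_bool Z \<le> 2 * k + 2 * of_bool (k = 0)"
  using assms by (cases P; cases Z) auto

locale regular_graph =
  fixes V :: "'a set" and E :: "'a \<Rightarrow> 'a \<Rightarrow> bool" and d :: nat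
  assumes simple: "simple_graph V E" and regular: "regular V E d"
begin

lemma finite_V: "finite V"
  using simple by (simp add: simple_graph_def)

lemma adjacent_in_V: "E u v \<Longrightarrow> u \<in> V \<and> v \<in> V"
  using simple by (simp add: simple_graph_def)

lemma adjacent_sym: "E u v \<Longrightarrow> E v u"
  using simple by (simp add: simple_graph_def)

lemma not_adjacent_self: "\<not> E v v"
  using simple by (simp add: simple_graph_def)

lemma mem_neighbours_iff [simp]: "w \<in> neighbours V E v \<longleftrightarrow> E v w"
  using adjacent_in_V by (auto simp: neighbours_def)

lemma finite_neighbours [simp]: "finite (neighbours V E v)"
  using finite_V by (simp add: neighbours_def)

lemma card_neighbours: "v \<in> V \<Longrightarrow> card (neighbours V E v) = d"
  using regular by (simp add: regular_def)

lemma sum_card_neighbours_Int_commute: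
  assumes "A \<subseteq> V" "B \<subseteq> V"
  shows "(\<Sum>a\<in>A. card (neighbours V E a \<inter> B)) = (\<Sum>b\<in>B. card (neighbours V E b \<inter> A))"
proof -
  have "finite A" "finite B"
    using assms finite_V finite_subset by auto
  have "(\<Sum>a\<in>A. card (neighbours V E a \<inter> B)) = (\<Sum>a\<in>A. \<Sum>b\<in>B. of_bool (E a b))"
    using \<open>finite B\<close> by (simp add: Int_commute Int_def)
  also have "\<dots> = (\<Sum>b\<in>B. \<Sum>a\<in>A. of_bool (E a b))"
    by (rule sum.swap)
  also have "\<dots> = (\<Sum>b\<in>B. card (neighbours V E b \<inter> A))"
    using \<open>finite A\<close> adjacent_sym
    by (simp add: Int_commute Int_def) (intro sum.cong arg_cong[where f = card]; blast)
  finally show ?thesis .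
qed

lemma clique_neighbourhood_closed:
  assumes clique: "\<And>a b. E x a \<Longrightarrow> E x b \<Longrightarrow> a \<noteq> b \<Longrightarrow> E a b"
    and xv: "E x v" and vw: "E v w"
  shows "w = x \<or> E x w"
proof -
  have "insert x (neighbours V E x - {v}) \<subseteq> neighbours V E v"
    using xv adjacent_sym[OF xv] by (auto intro: clique)
  moreover have "card (insert x (neighbours V E x - {v})) = card (neighbours V E v)"
  proof -
    have "neighbours V E x \<noteq> {}"
      using xv by auto
    then have "0 < d"
      using card_neighbours[of x] adjacent_in_V[OF xv] by (auto simp: card_gt_0_iff)
    then show ?thesis
      using xv adjacent_in_V[OF xv] not_adjacent_self[of x] card_neighbours by simp
  qed
  ultimately have "insert x (neighbours V E x - {v}) = neighbours V E v"
    by (intro card_subset_eq) auto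
  then show ?thesis
    using vw by auto
qed

lemma neighbourhood_not_clique:
  assumes conn: "connected_graph V E" and not_complete: "\<not> is_complete_graph V E (d + 1)"
    and x: "x \<in> V"
  shows "\<exists>a b. E x a \<and> E x b \<and> a \<noteq> b \<and> \<not> E a b"
proof (rule ccontr)
  assume "\<not> ?thesis"
  then have clique: "\<And>a b. E x a \<Longrightarrow> E x b \<Longrightarrow> a \<noteq> b \<Longrightarrow> E a b"
    by blast
  have reachable: "w = x \<or> E x w" if "E\<^sup>*\<^sup>* x w" for w
    using that
  proof (induction rule: rtranclp_induct)
    case (step v w)
    then show ?case
      using clique_neighbourhood_closed[OF clique] adjacent_sym by blast
  qed simp
  have V_eq: "V = insert x (neighbours V E x)"
    using conn x reachable adjacent_in_V by (fastforce simp: connected_graph_def)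
  have "card V = d + 1"
    using x not_adjacent_self[of x] by (subst V_eq) (simp add: card_neighbours)
  moreover have "E u v" if "u \<in> V" "v \<in> V" "u \<noteq> v" for u v
  proof -
    have "u = x \<or> E x u" "v = x \<or> E x v"
      using that V_eq by auto
    then show ?thesis
      using \<open>u \<noteq> v\<close> clique adjacent_sym by metis
  qed
  ultimately show False
    using not_complete by (simp add: is_complete_graph_def)
qed

end

locale minimum_total_vertex_cover = regular_graph +
  fixes S :: "'a set"
  assumes tvc: "total_vertex_cover V E S"
    and minimum: "\<And>S'. total_vertex_cover V E S' \<Longrightarrow> card S \<le> card S'"
begin

abbreviation I :: "'a set" where "I \<equiv> V - S"

lemma S_subset_V: "S \<subseteq> V"
  using tvc by (simp add: total_vertex_cover_def vertex_cover_def)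

lemma finite_S: "finite S"
  using S_subset_V finite_V finite_subset by blast

lemma card_V: "card V = card S + card I"
  using S_subset_V finite_V by (simp add: card_Diff_subset card_mono finite_S)

lemma I_independent: "x \<in> I \<Longrightarrow> y \<in> I \<Longrightarrow> \<not> E x y"
  using tvc by (auto simp: total_vertex_cover_def vertex_cover_def)

lemma has_neighbour_in_S: "v \<in> V \<Longrightarrow> \<exists>w\<in>S. E v w"
  using tvc by (simp add: total_vertex_cover_def total_dominating_set_def)

lemma larger_independent_set_traps_vertex:
  assumes J: "J \<subseteq> V" and indep: "\<And>x y. x \<in> J \<Longrightarrow> y \<in> J \<Longrightarrow> \<not> E x y"
    and larger: "card I < card J"
  shows "\<exists>v\<in>V - J. \<forall>w. E v w \<longrightarrow> w \<in> J"
proof (rule ccontr)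
  assume "\<not> ?thesis"
  then have "\<exists>w\<in>V - J. E v w" if "v \<in> V" for v
    using that indep has_neighbour_in_S adjacent_in_V by (cases "v \<in> J") blast+
  then have "total_vertex_cover V E (V - J)"
    using indep adjacent_in_V
    by (auto simp: total_vertex_cover_def vertex_cover_def total_dominating_set_def)
  then have "card S \<le> card (V - J)"
    by (rule minimum)
  moreover have "card (V - J) < card S"
    using larger card_V card_mono[OF finite_V J] card_Diff_subset[OF finite_subset[OF J finite_V] J]
    by simp
  ultimately show False
    by simp
qed

definition deg_I :: "'a \<Rightarrow> nat" where
  "deg_I t = card (neighbours V E t \<inter> I)"

lemma sum_deg_I: "(\<Sum>t\<in>S. deg_I t) = d * card I"
proof -
  have "(\<Sum>t\<in>S. deg_I t) = (\<Sum>x\<in>I. card (neighbours V E x \<inter> S))"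
    unfolding deg_I_def using S_subset_V by (intro sum_card_neighbours_Int_commute) auto
  also have "\<dots> = (\<Sum>x\<in>I. d)"
  proof (rule sum.cong)
    fix x assume x: "x \<in> I"
    have "neighbours V E x \<subseteq> S"
    proof
      fix w assume "w \<in> neighbours V E x"
      then show "w \<in> S"
        using x I_independent adjacent_in_V by (metis DiffI mem_neighbours_iff)
    qed
    then show "card (neighbours V E x \<inter> S) = d"
      using x card_neighbours by (simp add: Int_absorb2)
  qed simp
  finally show ?thesis
    by simp
qed

lemma le_deg_I_add_card:
  assumes "t \<in> V" "finite Y" "\<And>w. E t w \<Longrightarrow> w \<in> I \<or> w \<in> Y"
  shows "d \<le> deg_I t + card Y"
proof -
  have "neighbours V E t \<subseteq> (neighbours V E t \<inter> I) \<union> Y"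
    by (auto dest: assms(3))
  then have "card (neighbours V E t) \<le> card ((neighbours V E t \<inter> I) \<union> Y)"
    using assms(2) by (intro card_mono) auto
  also have "\<dots> \<le> deg_I t + card Y"
    unfolding deg_I_def by (rule card_Un_le)
  finally show ?thesis
    using card_neighbours assms(1) by simp
qed

lemma deg_I_pos:
  assumes "E x t" "x \<in> I"
  shows "0 < deg_I t"
proof -
  have "x \<in> neighbours V E t \<inter> I"
    using assms adjacent_sym by auto
  then show ?thesis
    unfolding deg_I_def by (auto simp: card_gt_0_iff)
qed

definition S0 :: "'a set" where
  "S0 = {t \<in> S. deg_I t = 0}"

lemma S0_subset_S: "S0 \<subseteq> S"
  by (auto simp: S0_def)

lemma S0_partner:
  assumes u: "u \<in> S0"
  shows "\<exists>w\<in>S. E w u \<and> (\<forall>w'. E w w' \<longrightarrow> w' \<in> I \<or> w' = u)"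
proof -
  have uS: "u \<in> S" and deg_u: "deg_I u = 0"
    using u by (auto simp: S0_def)
  have no_I: "\<not> E x u" if "x \<in> I" for x
    using deg_I_pos[of x u] that deg_u by auto
  have "\<not> E x y" if "x \<in> insert u I" "y \<in> insert u I" for x y
    using that no_I I_independent adjacent_sym not_adjacent_self by blast
  moreover have "card I < card (insert u I)"
    using uS finite_V by simp
  ultimately obtain v where v: "v \<in> V - insert u I" "\<forall>w. E v w \<longrightarrow> w \<in> insert u I"
    using larger_independent_set_traps_vertex[of "insert u I"] uS S_subset_V by blast
  moreover obtain w where "w \<in> S" "E v w"
    using has_neighbour_in_S v(1) by blast
  ultimately show ?thesis
    by blast
qed

lemma S0_partner_map:
  obtains g where "inj_on g S0" "g ` S0 \<subseteq> S"
    "\<And>u. u \<in> S0 \<Longrightarrow> d \<le> deg_I (g u) + 1"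
    "\<And>u w. u \<in> S0 \<Longrightarrow> E (g u) w \<Longrightarrow> w \<in> I \<or> w = u"
proof -
  obtain g where g: "\<And>u. u \<in> S0 \<Longrightarrow> g u \<in> S \<and> E (g u) u \<and> (\<forall>w. E (g u) w \<longrightarrow> w \<in> I \<or> w = u)"
    using S0_partner by metis
  have inj: "inj_on g S0"
  proof
    fix u u' assume u: "u \<in> S0" and u': "u' \<in> S0" and "g u = g u'"
    then have "E (g u) u'"
      using g[OF u'] by simp
    then have "u' \<in> I \<or> u' = u"
      using g[OF u] by blast
    then show "u = u'"
      using u' by (auto simp: S0_def)
  qed
  have deg: "d \<le> deg_I (g u) + 1" if u: "u \<in> S0" for u
  proof -
    have "g u \<in> V"
      using g[OF u] S_subset_V by blast
    then have "d \<le> deg_I (g u) + card {u}"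
      using g[OF u] by (intro le_deg_I_add_card) auto
    then show ?thesis
      by simp
  qed
  show thesis
    by (rule that[OF inj _ deg]) (use g in auto)
qed

theorem card_S_le_d_mult_card_I:
  assumes "3 \<le> d"
  shows "card S \<le> d * card I"
proof -
  obtain g where g: "inj_on g S0" "g ` S0 \<subseteq> S" "\<And>u. u \<in> S0 \<Longrightarrow> d \<le> deg_I (g u) + 1"
    by (metis S0_partner_map)
  \<comment> \<open>the weight deg_I t pays 1 for t itself, except that vertices of S0 are paid by their
      partners, whose deg_I is at least d - 1 \<ge> 2\<close>
  have "1 + of_bool (t \<in> g ` S0) \<le> deg_I t + of_bool (t \<in> S0)" if "t \<in> S" for t
  proof (cases "t \<in> g ` S0")
    case True
    then obtain u where "u \<in> S0" "t = g u"
      by blast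
    then have "2 \<le> deg_I t"
      using g(3) assms by fastforce
    then show ?thesis
      by (simp add: S0_def)
  next
    case False
    then show ?thesis
      using that by (cases "deg_I t = 0") (simp_all add: S0_def)
  qed
  then have "(\<Sum>t\<in>S. 1 + of_bool (t \<in> g ` S0)) \<le> (\<Sum>t\<in>S. deg_I t + of_bool (t \<in> S0))"
    by (rule sum_mono)
  then have "card S + card (g ` S0) \<le> d * card I + card S0"
    using S0_subset_S g(2) finite_S sum_deg_I unfolding sum.distrib by (simp add: Int_absorb1)
  then show ?thesis
    using card_image[OF g(1)] by simp
qed

definition L :: "'a set" where
  "L = {x \<in> I. \<forall>y. E x y \<longrightarrow> deg_I y \<le> 1}"

lemma L_subset_I: "L \<subseteq> I"
  by (auto simp: L_def)

lemma L_unique_I_neighbour: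
  assumes "x \<in> L" "x' \<in> I" "E x y" "E x' y"
  shows "x' = x"
proof -
  have "deg_I y \<le> Suc 0"
    using assms(1,3) by (simp add: L_def)
  moreover have "x \<in> neighbours V E y \<inter> I" "x' \<in> neighbours V E y \<inter> I"
    using assms adjacent_sym by (auto simp: L_def)
  ultimately show ?thesis
    unfolding deg_I_def by (metis card_le_Suc0_iff_eq finite_Int finite_neighbours)
qed

lemma L_swap_independent:
  assumes x: "x \<in> L" and ab: "E x a" "E x b" "a \<noteq> b" "\<not> E a b"
    and p: "p \<in> insert a (insert b (I - {x}))" and q: "q \<in> insert a (insert b (I - {x}))"
  shows "\<not> E p q"
proof
  assume pq: "E p q"
  have ab_no_I: "\<not> E c y" if "c \<in> {a, b}" "y \<in> I - {x}" for c y
    using that ab L_unique_I_neighbour[OF x, of y c] adjacent_sym by blast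
  consider "p \<in> I - {x}" "q \<in> I - {x}" | "p \<in> {a, b}" "q \<in> I - {x}"
    | "q \<in> {a, b}" "p \<in> I - {x}" | "p \<in> {a, b}" "q \<in> {a, b}"
    using p q by blast
  then show False
  proof cases
    case 1
    then show ?thesis using pq I_independent by blast
  next
    case 2
    then show ?thesis using pq ab_no_I by blast
  next
    case 3
    then show ?thesis using pq ab_no_I adjacent_sym by blast
  next
    case 4
    then show ?thesis using pq ab(4) adjacent_sym not_adjacent_self by blast
  qed
qed

lemma L_partner:
  assumes conn: "connected_graph V E" and not_complete: "\<not> is_complete_graph V E (d + 1)"
    and "3 \<le> d" and x: "x \<in> L"
  shows "\<exists>z\<in>S. d \<le> deg_I z + 2 \<and> (\<forall>y\<in>S. E z y \<longrightarrow> E x y)"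
proof -
  have xI: "x \<in> I"
    using x by (simp add: L_def)
  obtain a b where ab: "E x a" "E x b" "a \<noteq> b" "\<not> E a b"
    using neighbourhood_not_clique[OF conn not_complete] xI by blast
  have aS: "a \<in> S" and bS: "b \<in> S"
    using ab xI I_independent adjacent_in_V by blast+
  let ?J = "insert a (insert b (I - {x}))"
  have J_indep: "\<not> E p q" if "p \<in> ?J" "q \<in> ?J" for p q
    using L_swap_independent[OF x ab] that by blast
  have J_card: "card I < card ?J"
    using card_exchange_one_for_two[of I x a b] xI aS bS ab(3) finite_V by simp
  have J_V: "?J \<subseteq> V"
    using aS bS S_subset_V by blast
  obtain z where z: "z \<in> V - ?J" "\<forall>w. E z w \<longrightarrow> w \<in> ?J"
    using larger_independent_set_traps_vertex[OF J_V J_indep J_card] by blast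
  have "d \<le> deg_I z + card {a, b}"
    using z by (intro le_deg_I_add_card) auto
  then have deg_z: "d \<le> deg_I z + 2"
    using ab(3) by simp
  have "neighbours V E x \<inter> I = {}"
    using xI I_independent by auto
  then have "z \<noteq> x"
    using deg_z \<open>3 \<le> d\<close> by (auto simp: deg_I_def)
  then have "z \<in> S"
    using z by blast
  moreover have "\<forall>y\<in>S. E z y \<longrightarrow> E x y"
    using z ab by auto
  ultimately show ?thesis
    using deg_z by blast
qed

lemma L_partner_map:
  assumes "connected_graph V E" "\<not> is_complete_graph V E (d + 1)" "3 \<le> d"
  obtains f where "inj_on f L" "f ` L \<subseteq> S"
    "\<And>x. x \<in> L \<Longrightarrow> d \<le> deg_I (f x) + 2"
    "\<And>x y. x \<in> L \<Longrightarrow> y \<in> S \<Longrightarrow> E (f x) y \<Longrightarrow> E x y"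
proof -
  obtain f where f: "\<And>x. x \<in> L \<Longrightarrow> f x \<in> S \<and> d \<le> deg_I (f x) + 2 \<and> (\<forall>y\<in>S. E (f x) y \<longrightarrow> E x y)"
    using L_partner[OF assms] by metis
  have inj: "inj_on f L"
  proof
    fix x x' assume x: "x \<in> L" and x': "x' \<in> L" and "f x = f x'"
    obtain y where "y \<in> S" "E (f x) y"
      using has_neighbour_in_S f[OF x] S_subset_V by blast
    then have "E x y" "E x' y"
      using f[OF x] f[OF x'] \<open>f x = f x'\<close> by auto
    then show "x = x'"
      using L_unique_I_neighbour[OF x, of x' y] x' by (simp add: L_def)
  qed
  show thesis
    by (rule that[OF inj]) (use f in auto)
qed

lemma card_I_le_sum_deg_I_add_card_L:
  "card I \<le> (\<Sum>t\<in>S. if 2 \<le> deg_I t then deg_I t else 0) + card L"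
proof -
  let ?S2 = "{t \<in> S. 2 \<le> deg_I t}"
  have "card (I - L) = (\<Sum>x\<in>I - L. 1)"
    by simp
  also have "\<dots> \<le> (\<Sum>x\<in>I - L. card (neighbours V E x \<inter> ?S2))"
  proof (rule sum_mono)
    fix x assume x: "x \<in> I - L"
    then obtain y where y: "E x y" "2 \<le> deg_I y"
      by (auto simp: L_def)
    moreover have "y \<in> S"
      using y(1) x I_independent adjacent_in_V by blast
    ultimately have "y \<in> neighbours V E x \<inter> ?S2"
      by simp
    then have "0 < card (neighbours V E x \<inter> ?S2)"
      by (auto simp: card_gt_0_iff)
    then show "1 \<le> card (neighbours V E x \<inter> ?S2)"
      by simp
  qed
  also have "\<dots> \<le> (\<Sum>x\<in>I. card (neighbours V E x \<inter> ?S2))"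
    by (rule sum_mono2) (use finite_V in auto)
  also have "\<dots> = (\<Sum>t\<in>?S2. deg_I t)"
    unfolding deg_I_def using S_subset_V by (intro sum_card_neighbours_Int_commute) auto
  also have "\<dots> = (\<Sum>t\<in>S. if 2 \<le> deg_I t then deg_I t else 0)"
    using finite_S by (rule sum.inter_filter)
  finally show ?thesis
    using diff_card_le_card_Diff[of L I] finite_subset[OF L_subset_I] finite_V by simp
qed

lemma S0_partner_not_L_partner:
  assumes u: "u \<in> S0" and x: "x \<in> L" and "t \<in> V"
    and t_u: "\<And>w. E t w \<Longrightarrow> w \<in> I \<or> w = u" and t_x: "\<And>y. y \<in> S \<Longrightarrow> E t y \<Longrightarrow> E x y"
  shows False
proof -
  obtain y where y: "y \<in> S" "E t y"
    using has_neighbour_in_S \<open>t \<in> V\<close> by blast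
  then have "y = u" "E x y"
    using t_u t_x by blast+
  then have "0 < deg_I u"
    using deg_I_pos x by (auto simp: L_def)
  then show False
    using u by (simp add: S0_def)
qed

theorem two_card_S_add_card_I_le:
  assumes conn: "connected_graph V E" and not_complete: "\<not> is_complete_graph V E (d + 1)"
    and "5 \<le> d"
  shows "2 * card S + card I \<le> 2 * d * card I"
proof -
  obtain g where g: "inj_on g S0" "g ` S0 \<subseteq> S" "\<And>u. u \<in> S0 \<Longrightarrow> d \<le> deg_I (g u) + 1"
    "\<And>u w. u \<in> S0 \<Longrightarrow> E (g u) w \<Longrightarrow> w \<in> I \<or> w = u"
    by (metis S0_partner_map)
  have "3 \<le> d"
    using \<open>5 \<le> d\<close> by simp
  obtain f where f: "inj_on f L" "f ` L \<subseteq> S" "\<And>x. x \<in> L \<Longrightarrow> d \<le> deg_I (f x) + 2"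
    "\<And>x y. x \<in> L \<Longrightarrow> y \<in> S \<Longrightarrow> E (f x) y \<Longrightarrow> E x y"
    by (metis L_partner_map[OF conn not_complete \<open>3 \<le> d\<close>])
  have disjoint: "g u \<noteq> f x" if u: "u \<in> S0" and x: "x \<in> L" for u x
  proof
    assume "g u = f x"
    moreover have "g u \<in> V"
      using g(2) u S_subset_V by blast
    ultimately show False
      using S0_partner_not_L_partner[OF u x _ g(4)[OF u]] f(4)[OF x] by metis
  qed
  have "2 + (if 2 \<le> deg_I t then deg_I t else 0) + 2 * of_bool (t \<in> g ` S0) + of_bool (t \<in> f ` L)
      \<le> 2 * deg_I t + 2 * of_bool (t \<in> S0)" if t: "t \<in> S" for t
  proof -
    have "t \<in> g ` S0 \<Longrightarrow> d \<le> deg_I t + 1" "t \<in> f ` L \<Longrightarrow> d \<le> deg_I t + 2"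
      using g(3) f(3) by auto
    moreover have "\<not> (t \<in> g ` S0 \<and> t \<in> f ` L)"
      using disjoint by auto
    moreover have "t \<in> S0 \<longleftrightarrow> deg_I t = 0"
      using t by (simp add: S0_def)
    ultimately show ?thesis
      using discharging_inequality[OF \<open>5 \<le> d\<close>] by presburger
  qed
  then have "(\<Sum>t\<in>S. 2 + (if 2 \<le> deg_I t then deg_I t else 0) + 2 * of_bool (t \<in> g ` S0)
        + of_bool (t \<in> f ` L)) \<le> (\<Sum>t\<in>S. 2 * deg_I t + 2 * of_bool (t \<in> S0))"
    by (rule sum_mono)
  then have "2 * card S + (\<Sum>t\<in>S. if 2 \<le> deg_I t then deg_I t else 0) + 2 * card (g ` S0)
      + card (f ` L) \<le> 2 * (d * card I) + 2 * card S0"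
    using S0_subset_S g(2) f(2) finite_S sum_deg_I
    unfolding sum.distrib sum_distrib_left[symmetric] by (simp add: Int_absorb1)
  then show ?thesis
    using card_I_le_sum_deg_I_add_card_L card_image[OF g(1)] card_image[OF f(1)] by simp
qed

theorem card_S_le_ratio:
  assumes "3 \<le> d"
  shows "real (card S) \<le> real d / real (d + 1) * real (card V)"
proof -
  have "real (card S) \<le> real d * real (card I)"
    using card_S_le_d_mult_card_I[OF assms] by (metis of_nat_le_iff of_nat_mult)
  then have "real (card S) * real (d + 1) \<le> real d * real (card V)"
    using card_V by (simp add: algebra_simps)
  then show ?thesis
    by (simp add: field_simps)
qed

theorem card_S_le_ratio_connected:
  assumes "connected_graph V E" "\<not> is_complete_graph V E (d + 1)" "5 \<le> d"
  shows "real (card S) \<le> (real d - 1 / (2 * real d + 1)) / real (d + 1) * real (card V)"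
proof -
  have "real d - 1 / (2 * real d + 1) = (2 * real d - 1) * (real d + 1) / (2 * real d + 1)"
    by (simp add: field_simps)
  then have ratio: "(real d - 1 / (2 * real d + 1)) / real (d + 1) = (2 * real d - 1) / (2 * real d + 1)"
    by (simp add: add.commute)
  have "real (2 * card S + card I) \<le> real (2 * d * card I)"
    using two_card_S_add_card_I_le[OF assms] by (simp only: of_nat_le_iff)
  then have "real (card S) * (2 * real d + 1) \<le> (2 * real d - 1) * real (card V)"
    using card_V by (simp add: algebra_simps)
  then have "real (card S) \<le> (2 * real d - 1) / (2 * real d + 1) * real (card V)"
    by (simp add: field_simps)
  then show ?thesis
    unfolding ratio .
qed

end

lemma (in regular_graph) ex_minimum_total_vertex_cover:
  assumes "0 < d"
  shows "\<exists>S. minimum_total_vertex_cover V E d S"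
proof -
  have "\<exists>w\<in>V. E v w" if "v \<in> V" for v
  proof -
    have "neighbours V E v \<noteq> {}"
      using assms that card_neighbours by fastforce
    then show ?thesis
      using adjacent_in_V by auto
  qed
  then have "total_vertex_cover V E V"
    using adjacent_in_V
    by (auto simp: total_vertex_cover_def vertex_cover_def total_dominating_set_def)
  then obtain S where "total_vertex_cover V E S" "\<forall>S'. total_vertex_cover V E S' \<longrightarrow> card S \<le> card S'"
    using ex_has_least_nat by metis
  then have "minimum_total_vertex_cover V E d S"
    by (simp add: minimum_total_vertex_cover_def minimum_total_vertex_cover_axioms_def regular_graph_axioms)
  then show ?thesis ..
qed

theorem theorem1p6:
  fixes d :: nat
  assumes "d \<ge> 3"
  shows "(\<forall>(V :: 'a set) E. simple_graph V E \<and> regular V E d \<longrightarrow>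
            (\<exists>S. total_vertex_cover V E S \<and> real (card S) \<le> real d / real (d + 1) * real (card V)))
       \<and> (d \<ge> 5 \<longrightarrow>
            (\<forall>(V :: 'a set) E. simple_graph V E \<and> regular V E d \<and> connected_graph V E
                 \<and> \<not> is_complete_graph V E (d + 1) \<longrightarrow>
               (\<exists>S. total_vertex_cover V E S \<and>
                  real (card S) \<le> (real d - 1 / (2 * real d + 1)) / real (d + 1) * real (card V))))"
proof (intro conjI allI impI)
  fix V :: "'a set" and E
  assume "simple_graph V E \<and> regular V E d"
  then interpret regular_graph V E d
    by unfold_locales auto
  obtain S where "minimum_total_vertex_cover V E d S"
    using ex_minimum_total_vertex_cover assms by auto
  then interpret minimum_total_vertex_cover V E d S .
  show "\<exists>S. total_vertex_cover V E S \<and> real (card S) \<le> real d / real (d + 1) * real (card V)"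
    using tvc card_S_le_ratio assms by blast
next
  fix V :: "'a set" and E
  assume "5 \<le> d" and G: "simple_graph V E \<and> regular V E d \<and> connected_graph V E
    \<and> \<not> is_complete_graph V E (d + 1)"
  then interpret regular_graph V E d
    by unfold_locales auto
  obtain S where "minimum_total_vertex_cover V E d S"
    using ex_minimum_total_vertex_cover assms by auto
  then interpret minimum_total_vertex_cover V E d S .
  show "\<exists>S. total_vertex_cover V E S \<and>
      real (card S) \<le> (real d - 1 / (2 * real d + 1)) / real (d + 1) * real (card V)"
    using tvc card_S_le_ratio_connected G \<open>5 \<le> d\<close> by blast
qed

end
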